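(* Let $\mathcal B_1$ and $\mathcal B_2$ be real normed spaces, and let $U_1\subset\mathcal B_1$ and $U_2\subset\mathcal B_2$ be non-empty open subsets. Suppose that $\mathcal T:U_1\to U_2$ is a surjective isometry, i.e. $\|\mathcal T(u)-\mathcal T(v)\|=\|u-v\|$ for all $u,v\in U_1$ and $\mathcal T(U_1)=U_2$. If $f,g\in U_1$ satisfy $(1-r)f+rg\in U_1$ for every $r$ with $0\le r\le 1$, then \[ \mathcal T\left(\frac{f+g}{2}\right)=\frac{\mathcal T(f)+\mathcal T(g)}{2}. \]
   Context: No additional context is needed beyond the statement; $\mathcal T$ is not assumed to be linear or affine. *)

theory Defs
  imports "HOL-Analysis.Analysis"
begin

end

theory Submission
  imports Defs
begin

(* The proof follows Vaisala's proof of the Mazur-Ulam theorem, localised.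
   (1) Abstract core, in any metric space: if a bounded set S carries an isometric
       "reflection" psi fixing z with dist (psi u) u = 2 * dist u z, then every
       isometry of S onto itself fixes z (iterating g \<mapsto> psi o g^-1 o psi o g doubles
       the displacement of z, which must stay bounded).
   (2) Local midpoint preservation: for x, y with midpoint z, apply (1) to the set S of
       points at distance |x - y|/2 from both x and y and to the isometry
       T^-1 o (point reflection through the image midpoint) o T; this needs S and its
       image to lie in U1, U2, guaranteed by balls around z and T z.
   (3) A map preserving midpoints of all close pairs on [f, g] is affine along a fine
       equidistant grid of [f, g], hence preserves the midpoint of f and g.
   (4) Compactness of the segment [f, g] yields a uniform radius for the balls in (2),
       so (2) provides the hypothesis of (3); the theorem follows. *)

definition self_isometry :: "'a::metric_space set \<Rightarrow> ('a \<Rightarrow> 'a) \<Rightarrow> ('a \<Rightarrow> 'a) \<Rightarrow> bool" where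
  "self_isometry S g h \<longleftrightarrow>
     (\<forall>u\<in>S. g u \<in> S \<and> h u \<in> S \<and> h (g u) = u \<and> g (h u) = u) \<and>
     (\<forall>u\<in>S. \<forall>v\<in>S. dist (g u) (g v) = dist u v)"

lemma self_isometry_inverse_dist:
  assumes "self_isometry S g h" "u \<in> S" "v \<in> S"
  shows "dist (h u) (h v) = dist u v"
  using assms unfolding self_isometry_def by metis

lemma self_isometry_comp:
  assumes "self_isometry S g h" "self_isometry S g' h'"
  shows "self_isometry S (g \<circ> g') (h' \<circ> h)"
  using assms unfolding self_isometry_def by simp

lemma self_isometry_conjugate:
  assumes iso: "\<forall>u\<in>S. \<forall>v\<in>S. dist (T u) (T v) = dist u v"
    and onto: "T ` S = S'"
    and g: "self_isometry S' g h"
  shows "self_isometry S (inv_into S T \<circ> g \<circ> T) (inv_into S T \<circ> h \<circ> T)"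
proof -
  define Ti where "Ti = inv_into S T"
  have "inj_on T S"
    by (rule inj_onI) (metis iso dist_eq_0_iff)
  then have Ti_T: "Ti (T u) = u" if "u \<in> S" for u
    using that by (simp add: Ti_def)
  have into: "Ti w \<in> S" "T (Ti w) = w" if "w \<in> S'" for w
    using that onto by (auto simp: Ti_def inv_into_into f_inv_into_f)
  have TS: "T u \<in> S'" if "u \<in> S" for u
    using that onto by blast
  have g_S': "g w \<in> S'" "h w \<in> S'" "h (g w) = w" "g (h w) = w" if "w \<in> S'" for w
    using g that unfolding self_isometry_def by auto
  have g_dist: "dist (g w) (g w') = dist w w'" if "w \<in> S'" "w' \<in> S'" for w w'
    using g that unfolding self_isometry_def by auto
  have dist_conj: "dist (Ti (g (T u))) (Ti (g (T v))) = dist u v" if "u \<in> S" "v \<in> S" for u v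
  proof -
    have "dist (Ti (g (T u))) (Ti (g (T v))) = dist (T (Ti (g (T u)))) (T (Ti (g (T v))))"
      using iso into(1) g_S'(1) TS that by simp
    also have "\<dots> = dist (T u) (T v)"
      using into(2) g_S'(1) g_dist TS that by simp
    finally show ?thesis
      using iso that by simp
  qed
  show ?thesis
    unfolding self_isometry_def Ti_def[symmetric] comp_apply
    using into g_S' TS Ti_T dist_conj by simp
qed

lemma nonneg_bounded_doubling_is_zero:
  fixes c :: real
  assumes "c \<ge> 0" "\<And>n. 2 ^ n * c \<le> B"
  shows "c = 0"
proof (rule ccontr)
  assume "c \<noteq> 0"
  with assms(1) have "c > 0" by simp
  obtain n :: nat where "B / c < 2 ^ n" using real_arch_pow[of 2 "B / c"] by auto
  with \<open>c > 0\<close> have "B < 2 ^ n * c" by (simp add: field_simps)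
  with assms(2)[of n] show False by simp
qed

lemma vaisala_fixed_point:
  fixes S :: "'a::metric_space set"
  assumes "bounded S" "z \<in> S"
    and refl: "self_isometry S \<psi> \<psi>" "\<psi> z = z" "\<And>u. u \<in> S \<Longrightarrow> dist (\<psi> u) u = 2 * dist u z"
    and phi: "self_isometry S \<phi> \<theta>"
  shows "\<phi> z = z"
proof -
  have doubling: "self_isometry S (\<psi> \<circ> h \<circ> \<psi> \<circ> g) (h \<circ> \<psi> \<circ> g \<circ> \<psi>)
      \<and> dist ((\<psi> \<circ> h \<circ> \<psi> \<circ> g) z) z = 2 * dist (g z) z"
    if g: "self_isometry S g h" for g h
  proof
    have h: "self_isometry S h g"
      using g self_isometry_inverse_dist[OF g] unfolding self_isometry_def by blast
    show "self_isometry S (\<psi> \<circ> h \<circ> \<psi> \<circ> g) (h \<circ> \<psi> \<circ> g \<circ> \<psi>)"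
      using self_isometry_comp[OF self_isometry_comp[OF self_isometry_comp[OF refl(1) h] refl(1)] g]
      by (simp add: comp_assoc)
    have gz: "g z \<in> S" "\<psi> (g z) \<in> S" "h (\<psi> (g z)) \<in> S" "h (g z) = z"
      using g refl(1) \<open>z \<in> S\<close> unfolding self_isometry_def by auto
    have "dist ((\<psi> \<circ> h \<circ> \<psi> \<circ> g) z) z = dist (\<psi> (h (\<psi> (g z)))) (\<psi> z)"
      using refl(2) by simp
    also have "\<dots> = dist (h (\<psi> (g z))) (h (g z))"
      using refl(1) gz \<open>z \<in> S\<close> unfolding self_isometry_def by simp
    also have "\<dots> = dist (\<psi> (g z)) (g z)"
      using self_isometry_inverse_dist[OF g gz(2,1)] .
    also have "\<dots> = 2 * dist (g z) z"
      using refl(3) gz by simp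
    finally show "dist ((\<psi> \<circ> h \<circ> \<psi> \<circ> g) z) z = 2 * dist (g z) z" .
  qed
  have iterate: "\<exists>g h. self_isometry S g h \<and> dist (g z) z = 2 ^ n * dist (\<phi> z) z" for n
  proof (induction n)
    case 0
    show ?case using phi by auto
  next
    case (Suc n)
    then obtain g h where "self_isometry S g h" "dist (g z) z = 2 ^ n * dist (\<phi> z) z"
      by blast
    with doubling[of g h] show ?case by (metis mult.assoc power_Suc)
  qed
  obtain B where B: "\<And>u. u \<in> S \<Longrightarrow> dist z u \<le> B"
    using \<open>bounded S\<close> bounded_any_center by metis
  have "2 ^ n * dist (\<phi> z) z \<le> B" for n
  proof -
    obtain g h where "self_isometry S g h" "dist (g z) z = 2 ^ n * dist (\<phi> z) z"
      using iterate by blast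
    then show ?thesis using B \<open>z \<in> S\<close> unfolding self_isometry_def by (metis dist_commute)
  qed
  then show ?thesis
    using nonneg_bounded_doubling_is_zero[of "dist (\<phi> z) z" B] by simp
qed

definition equidistant :: "'a::metric_space \<Rightarrow> 'a \<Rightarrow> real \<Rightarrow> 'a set" where
  "equidistant a b r = {u. dist u a = r \<and> dist u b = r}"

lemma reflection_self_isometry:
  fixes a b :: "'a::real_normed_vector"
  shows "self_isometry (equidistant a b r) (\<lambda>u. a + b - u) (\<lambda>u. a + b - u)"
  unfolding self_isometry_def equidistant_def
  by (auto simp: dist_norm norm_minus_commute algebra_simps)

lemma dist_midpoint_le:
  fixes x y u :: "'a::real_normed_vector"
  shows "dist (midpoint x y) u \<le> (dist x u + dist y u) / 2"
proof -
  have "2 *\<^sub>R (midpoint x y - u) = (x - u) + (y - u)"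
    by (simp add: midpoint_def algebra_simps scaleR_2)
  then have "2 * dist (midpoint x y) u = norm ((x - u) + (y - u))"
    by (metis dist_norm norm_scaleR abs_numeral)
  then show ?thesis
    using norm_triangle_ineq[of "x - u" "y - u"] by (simp add: dist_norm)
qed

lemma equidistant_subset_cball_midpoint:
  fixes x y :: "'a::real_normed_vector"
  shows "equidistant x y r \<subseteq> cball (midpoint x y) r"
proof
  fix u assume "u \<in> equidistant x y r"
  then show "u \<in> cball (midpoint x y) r"
    using dist_midpoint_le[of x y u] by (simp add: equidistant_def dist_commute)
qed

lemma equidistant_subset_cball:
  assumes "dist c a \<le> r"
  shows "equidistant a b r \<subseteq> cball c (2 * r)"
proof
  fix u assume "u \<in> equidistant a b r"
  then show "u \<in> cball c (2 * r)"
    using assms dist_triangle[of c u a] by (simp add: equidistant_def dist_commute)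
qed

lemma isometry_image_equidistant:
  assumes iso: "\<forall>u\<in>U1. \<forall>v\<in>U1. dist (T u) (T v) = dist u v"
    and onto: "T ` U1 = U2"
    and "a \<in> U1" "b \<in> U1"
    and "equidistant a b r \<subseteq> U1" "equidistant (T a) (T b) r \<subseteq> U2"
  shows "T ` equidistant a b r = equidistant (T a) (T b) r"
proof
  show "T ` equidistant a b r \<subseteq> equidistant (T a) (T b) r"
    using assms by (auto simp: equidistant_def)
  show "equidistant (T a) (T b) r \<subseteq> T ` equidistant a b r"
  proof
    fix w assume w: "w \<in> equidistant (T a) (T b) r"
    then obtain u where u: "u \<in> U1" "w = T u"
      using assms(6) onto by blast
    then have "u \<in> equidistant a b r"
      using w iso \<open>a \<in> U1\<close> \<open>b \<in> U1\<close> by (simp add: equidistant_def)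
    then show "w \<in> T ` equidistant a b r"
      using u by blast
  qed
qed

lemma dist_reflection_midpoint:
  fixes x y u :: "'a::real_normed_vector"
  shows "dist (x + y - u) u = 2 * dist u (midpoint x y)"
proof -
  have "x + y - u - u = 2 *\<^sub>R (midpoint x y - u)"
    by (simp add: midpoint_def algebra_simps scaleR_2)
  then show ?thesis by (simp add: dist_norm norm_minus_commute)
qed

text \<open>Local midpoint preservation: the equidistant set of \<open>x, y\<close> lies in the ball of
  radius \<open>dist x y / 2\<close> about the midpoint, and its image in the ball of radius \<open>dist x y\<close>
  about the image of the midpoint; there Vaisala's lemma applies.\<close>

lemma isometry_preserves_midpoint_locally:
  fixes T :: "'a::real_normed_vector \<Rightarrow> 'b::real_normed_vector"
  assumes iso: "\<forall>u\<in>U1. \<forall>v\<in>U1. dist (T u) (T v) = dist u v"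
    and onto: "T ` U1 = U2"
    and ball1: "cball (midpoint x y) (dist x y / 2) \<subseteq> U1"
    and ball2: "cball (T (midpoint x y)) (dist x y) \<subseteq> U2"
  shows "T (midpoint x y) = midpoint (T x) (T y)"
proof -
  define z r where "z = midpoint x y" and "r = dist x y / 2"
  define S where "S = equidistant x y r"
  define \<psi>' where "\<psi>' = (\<lambda>w. T x + T y - w)"
  have zS: "z \<in> S"
    by (simp add: S_def equidistant_def z_def r_def dist_midpoint)
  have xU: "x \<in> U1" and yU: "y \<in> U1"
    using ball1 by (auto simp: dist_midpoint)
  have SU: "S \<subseteq> U1"
    using equidistant_subset_cball_midpoint ball1 by (fastforce simp: S_def z_def r_def)
  then have "dist (T z) (T x) = r"
    using iso xU zS by (auto simp: S_def equidistant_def)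
  then have S'U: "equidistant (T x) (T y) r \<subseteq> U2"
    using equidistant_subset_cball[of "T z" "T x" r "T y"] ball2 by (simp add: z_def r_def)
  have iso_S: "\<forall>u\<in>S. \<forall>v\<in>S. dist (T u) (T v) = dist u v"
    using iso SU by blast
  have onto_S: "T ` S = equidistant (T x) (T y) r"
    unfolding S_def by (rule isometry_image_equidistant[OF iso onto xU yU SU[unfolded S_def] S'U])
  define \<phi> where "\<phi> = inv_into S T \<circ> \<psi>' \<circ> T"
  have \<phi>_iso: "self_isometry S \<phi> \<phi>"
    unfolding \<phi>_def \<psi>'_def
    by (rule self_isometry_conjugate[OF iso_S onto_S reflection_self_isometry])
  have "\<phi> z = z"
  proof (rule vaisala_fixed_point[where \<psi> = "\<lambda>u. x + y - u" and \<theta> = \<phi>])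
    show "bounded S"
      unfolding S_def by (rule bounded_subset[OF bounded_cball equidistant_subset_cball_midpoint])
    show "self_isometry S (\<lambda>u. x + y - u) (\<lambda>u. x + y - u)"
      unfolding S_def by (rule reflection_self_isometry)
    show "x + y - z = z"
      by (metis z_def midpoint_plus_self add_diff_cancel_right')
  qed (use zS \<phi>_iso in \<open>auto simp: z_def dist_reflection_midpoint\<close>)
  have "\<psi>' (T z) \<in> T ` S"
    using onto_S zS reflection_self_isometry[where a = "T x" and b = "T y" and r = r]
    unfolding \<psi>'_def self_isometry_def by blast
  then have "T (\<phi> z) = \<psi>' (T z)"
    by (simp add: \<phi>_def f_inv_into_f)
  with \<open>\<phi> z = z\<close> have "T z = T x + T y - T z"
    by (simp add: \<psi>'_def)
  then have "T x + T y = T z + T z"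
    by (simp add: eq_diff_eq)
  then show ?thesis
    unfolding z_def by (metis midpoint_eq_iff)
qed

lemma midpoint_recurrence_arithmetic:
  fixes a :: "nat \<Rightarrow> 'a::real_vector"
  assumes rec: "\<And>k. k + 2 \<le> N \<Longrightarrow> a (k + 1) = midpoint (a k) (a (k + 2))"
  shows "k \<le> N \<Longrightarrow> a k = a 0 + real k *\<^sub>R (a 1 - a 0)"
proof (induction k rule: less_induct)
  case (less k)
  consider "k < 2" | j where "k = j + 2" by (metis add.commute le_Suc_ex not_less add_2_eq_Suc')
  then show ?case
  proof cases
    case 1
    then show ?thesis by (auto simp: less_2_cases_iff)
  next
    case 2
    have "a j + a (j + 2) = a (j + 1) + a (j + 1)"
      using rec[of j] less.prems 2 midpoint_eq_iff by metis
    then have rec_j: "a (j + 2) = a (j + 1) + a (j + 1) - a j"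
      by (metis add_diff_cancel_left')
    have IH_j: "a j = a 0 + real j *\<^sub>R (a 1 - a 0)"
      using less.IH[of j] less.prems 2 by simp
    have IH_Suc_j: "a (j + 1) = a 0 + real (j + 1) *\<^sub>R (a 1 - a 0)"
      using less.IH[of "j + 1"] less.prems 2 by simp
    show ?thesis
      unfolding 2 rec_j IH_j IH_Suc_j by (simp add: algebra_simps scaleR_2)
  qed
qed

lemma affine_midpoint:
  fixes f v :: "'a::real_vector"
  assumes "s + t = 2 * u"
  shows "midpoint (f + s *\<^sub>R v) (f + t *\<^sub>R v) = f + u *\<^sub>R v"
proof -
  have double: "(2 * u) *\<^sub>R v = u *\<^sub>R v + u *\<^sub>R v"
    by (metis scaleR_2 scaleR_scaleR)
  have "(f + s *\<^sub>R v) + (f + t *\<^sub>R v) = (f + f) + (s + t) *\<^sub>R v"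
    by (simp add: scaleR_add_left add_ac)
  also have "\<dots> = (f + u *\<^sub>R v) + (f + u *\<^sub>R v)"
    by (simp only: assms double add_ac)
  finally show ?thesis
    by (simp add: midpoint_eq_iff)
qed

text \<open>A map preserving midpoints of all close pairs on a segment preserves the midpoint
  of its endpoints: on the grid \<open>q k\<close> of \<open>2 n\<close> equal steps it is an arithmetic progression.\<close>

lemma midpoint_preserved_from_local:
  fixes T :: "'a::real_normed_vector \<Rightarrow> 'b::real_vector"
  assumes "e > 0"
    and local: "\<And>x y. x \<in> closed_segment f g \<Longrightarrow> y \<in> closed_segment f g \<Longrightarrow> dist x y < e
      \<Longrightarrow> T (midpoint x y) = midpoint (T x) (T y)"
  shows "T (midpoint f g) = midpoint (T f) (T g)"
proof -
  obtain n :: nat where n: "dist f g / e < n"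
    using reals_Archimedean2 by blast
  then have "n > 0"
    using \<open>e > 0\<close> by (metis divide_nonneg_pos le_less_trans of_nat_0_less_iff zero_le_dist)
  define q where "q k = f + (real k / real (2 * n)) *\<^sub>R (g - f)" for k
  have q_seg: "q k \<in> closed_segment f g" if "k \<le> 2 * n" for k
    unfolding in_segment q_def
    by (rule exI[of _ "real k / real (2 * n)"]) (use that in \<open>auto simp: algebra_simps divide_le_eq_1\<close>)
  have q_step: "q (k + 2) - q k = (1 / real n) *\<^sub>R (g - f)" for k
  proof -
    have "real (k + 2) / real (2 * n) - real k / real (2 * n) = 1 / real n"
      using \<open>n > 0\<close> by (simp add: field_simps)
    then show ?thesis
      by (simp add: q_def flip: scaleR_diff_left)
  qed
  have q_close: "dist (q k) (q (k + 2)) < e" for k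
  proof -
    have "dist (q k) (q (k + 2)) = norm (q (k + 2) - q k)"
      by (simp add: dist_norm norm_minus_commute)
    also have "\<dots> = dist f g / real n"
      by (simp only: q_step norm_scaleR) (simp add: dist_norm norm_minus_commute)
    also have "\<dots> < e"
      using n \<open>e > 0\<close> \<open>n > 0\<close> by (simp add: field_simps)
    finally show ?thesis .
  qed
  have q_mid: "q (k + 1) = midpoint (q k) (q (k + 2))" for k
    unfolding q_def using \<open>n > 0\<close>
    by (intro affine_midpoint[symmetric]) (simp add: field_simps)
  have T_mid: "(T \<circ> q) (k + 1) = midpoint ((T \<circ> q) k) ((T \<circ> q) (k + 2))"
    if "k + 2 \<le> 2 * n" for k
    unfolding comp_apply q_mid[of k] using that by (intro local q_seg q_close) auto
  define D where "D = T (q 1) - T f"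
  have "q n = f + (1 / 2) *\<^sub>R (g - f)"
    using \<open>n > 0\<close> by (simp add: q_def)
  also have "\<dots> = midpoint f g"
    using affine_midpoint[of 0 1 "1 / 2" f "g - f"] by simp
  finally have q_ends: "q 0 = f" "q n = midpoint f g" "q (2 * n) = g"
    using \<open>n > 0\<close> by (simp_all add: q_def)
  have "T (q k) = T f + real k *\<^sub>R D" if "k \<le> 2 * n" for k
    using midpoint_recurrence_arithmetic[of "2 * n" "T \<circ> q", OF T_mid that] q_ends(1)
    by (simp add: D_def)
  from this[of n] this[of "2 * n"] q_ends show ?thesis
    using affine_midpoint[of 0 "real (2 * n)" "real n" "T f" D] by simp
qed

lemma isometry_uniform_margin:
  fixes T :: "'a::metric_space \<Rightarrow> 'b::metric_space"
  assumes "open U1" "open U2"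
    and iso: "\<forall>u\<in>U1. \<forall>v\<in>U1. dist (T u) (T v) = dist u v"
    and onto: "T ` U1 = U2"
    and K: "compact K" "K \<subseteq> U1"
  obtains e where "e > 0" "\<And>x. x \<in> K \<Longrightarrow> cball x e \<subseteq> U1 \<and> cball (T x) e \<subseteq> U2"
proof -
  have "1-lipschitz_on U1 T"
    using iso by (intro lipschitz_onI) auto
  then have "continuous_on K T"
    using K(2) lipschitz_on_continuous_on continuous_on_subset by blast
  then have "compact (T ` K)"
    using K(1) by (rule compact_continuous_image)
  moreover have "T ` K \<subseteq> U2"
    using K(2) onto by blast
  ultimately obtain e2 where "e2 > 0" "(\<Union>y\<in>T ` K. cball y e2) \<subseteq> U2"
    using compact_subset_open_imp_cball_epsilon_subset \<open>open U2\<close> by metis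
  moreover obtain e1 where "e1 > 0" "(\<Union>x\<in>K. cball x e1) \<subseteq> U1"
    using compact_subset_open_imp_cball_epsilon_subset[OF K(1) \<open>open U1\<close> K(2)] by metis
  ultimately show ?thesis
    by (intro that[of "min e1 e2"]) (auto simp: subset_eq)
qed

corollary isometry_preserves_midpoint_within_margin:
  fixes T :: "'a::real_normed_vector \<Rightarrow> 'b::real_normed_vector"
  assumes iso: "\<forall>u\<in>U1. \<forall>v\<in>U1. dist (T u) (T v) = dist u v"
    and onto: "T ` U1 = U2"
    and "cball (midpoint x y) e \<subseteq> U1" "cball (T (midpoint x y)) e \<subseteq> U2"
    and "dist x y \<le> e"
  shows "T (midpoint x y) = midpoint (T x) (T y)"
proof (rule isometry_preserves_midpoint_locally[OF iso onto])
  have "dist x y / 2 \<le> e"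
    using \<open>dist x y \<le> e\<close> zero_le_dist[of x y] by linarith
  then show "cball (midpoint x y) (dist x y / 2) \<subseteq> U1"
    using assms(3) subset_cball by blast
  show "cball (T (midpoint x y)) (dist x y) \<subseteq> U2"
    using assms(4,5) subset_cball by blast
qed

theorem lemma2p1:
  fixes U1 :: "'a::real_normed_vector set" and U2 :: "'b::real_normed_vector set"
    and T :: "'a \<Rightarrow> 'b" and f g :: 'a
  assumes "open U1" "U1 \<noteq> {}" "open U2" "U2 \<noteq> {}"
    and "\<forall>u\<in>U1. \<forall>v\<in>U1. norm (T u - T v) = norm (u - v)"
    and "T ` U1 = U2"
    and "f \<in> U1" "g \<in> U1"
    and "\<forall>r::real. 0 \<le> r \<and> r \<le> 1 \<longrightarrow> (1 - r) *\<^sub>R f + r *\<^sub>R g \<in> U1"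
  shows "T ((1/2::real) *\<^sub>R (f + g)) = (1/2::real) *\<^sub>R (T f + T g)"
proof -
  have iso: "\<forall>u\<in>U1. \<forall>v\<in>U1. dist (T u) (T v) = dist u v"
    using assms(5) by (simp add: dist_norm)
  have seg: "closed_segment f g \<subseteq> U1"
    using assms(9) by (auto simp: in_segment)
  obtain e where "e > 0" and
    margin: "\<And>x. x \<in> closed_segment f g \<Longrightarrow> cball x e \<subseteq> U1 \<and> cball (T x) e \<subseteq> U2"
    using isometry_uniform_margin[OF assms(1,3) iso assms(6) compact_segment seg] by metis
  have "T (midpoint f g) = midpoint (T f) (T g)"
  proof (rule midpoint_preserved_from_local[OF \<open>e > 0\<close>])
    fix x y assume x: "x \<in> closed_segment f g" and y: "y \<in> closed_segment f g"
      and "dist x y < e"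
    have "midpoint x y \<in> closed_segment f g"
      using closed_segment_subset[OF x y] by auto
    then show "T (midpoint x y) = midpoint (T x) (T y)"
      using margin \<open>dist x y < e\<close>
      by (intro isometry_preserves_midpoint_within_margin[OF iso assms(6)]) auto
  qed
  then show ?thesis
    by (simp add: midpoint_def)
qed

end
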